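(* Let $\mathscr T\colon\mathbb{IDA}\to\mathbb{IM}$ send each involutive generalized dynamic algebra $\mathfrak K$ to the involutive submonoid $\mathscr T(K)$ of $(K,\odot,{}^*,e)$ generated by $\widetilde K$ (the smallest subset containing $\widetilde K$ and $e$ and closed under $\odot$ and ${}^*$), and each morphism $f$ to its restriction. Then: (1) for every IDA $\mathfrak K$, $\widetilde K\subseteq\mathscr T(K)\subseteq K$ and $\mathscr T(\mathfrak K)$ is an involutive submonoid of $(K,\odot,{}^*,e)$; (2) if $\mathfrak K$ is a semi-Foulis dynamic algebra such that for all $s,t\in\mathscr T(K)$, $s=t$ iff $s\equiv t$, then $\nu_{\mathfrak K}\colon\mathscr T(\mathfrak K)\to\mathscr T(\mathbf{Lin}(\widetilde{\mathfrak K}))$, $\nu_{\mathfrak K}(k)=k\bullet(-)$, is a well-defined isomorphism of involutive monoids, and its restriction to $\widetilde K$ is an order-preserving bijection from $(\widetilde K,\preceq)$ onto the test set $\{\pi_u\mid u\in\widetilde K\}$ of $\mathbf{Lin}(\widetilde{\mathfrak K})$ ordered by $p\le q\iff p=q\circ p$; (3) for every complete orthomodular lattice $\mathcal M$, $\mu_{\mathcal M}\colon\mathscr T(\mathbf{Lin}(\mathcal M))\to\mathscr T(\mathscr P(\mathscr T(\mathbf{Lin}(\mathcal M))))$, $\mu_{\mathcal M}(f)=\{f\}$, is an isomorphism in $\mathbb{IM}$; (4) for every morphism $f\colon\mathfrak K_1\to\mathfrak K_2$ in $\mathbb{IDA}$, $f(\mathscr T(K_1))\subseteq\mathscr T(K_2)$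 and $\mathscr T(f)=f|_{\mathscr T(K_1)}$.
   Context: An involutive unital quantale is $(Q,\bigsqcup,\odot,{}^*,e)$: complete join-semilattice $Q$, associative $\odot$ distributing over arbitrary joins in each argument, unit $e$, ${}^*$ with $x^{**}=x$, $(x\odot y)^*=y^*\odot x^*$, $(\bigsqcup x_i)^*=\bigsqcup x_i^*$. An involutive generalized dynamic algebra (IDA) is such a quantale with ${\sim}\colon K\to K$ satisfying, for all $x,y$ and families $(x_i)$: ${\sim}(x\odot{\sim}{\sim}y)={\sim}(x\odot y)$; ${\sim}(\bigsqcup{\sim}{\sim}x_i)={\sim}(\bigsqcup x_i)$; $({\sim}x)^*={\sim}x$; ${\sim}{\sim}({\sim}{\sim}x\odot y)={\sim}({\sim}x\sqcup{\sim}({\sim}x\sqcup y))$. Test set $\widetilde K=\{{\sim}k\mid k\in K\}$; $\bigvee W={\sim}{\sim}\bigsqcup W$ for $W\subseteq\widetilde K$; $w^\perp={\sim}w$; $k\preceq l$ iff $\bigvee\{k,l\}=l$; $k\bullet v={\sim}{\sim}(k\odot v)$ for $k\in K,v\in\widetilde K$; $k\equiv l$ iff $k\bullet w=l\bullet w$ for all $w\in\widetilde K$. IDA morphisms preserve arbitrary joins, $\odot$, ${}^*$, unit, ${\sim}$ (category $\mathbb{IDA}$); $\mathfrak K$ is semi-Foulis if $(\widetilde K,\preceq,{}^\perp)$ is a complete orthomodular lattice. $\mathbb{IM}$ is the category of involutive monoids $(M,\cdot,e,{}^* )$ with homomorphisms preserving product, unit, involution. For a complete orthomodular lattice $\mathcal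 M$: Sasaki projection $\pi_m(x)=m\wedge(m^\perp\vee x)$; a map $f$ is linear if there is $f^*$ with $f(x)\le y^\perp\iff x\le f^*(y)^\perp$ for all $x,y$; $\mathbf{Lin}(\mathcal M)$ (linear maps with pointwise joins, composition, ${}^*$, unit $\mathrm{id}$) is an IDA with ${\sim}f=\pi_{f(1)^\perp}$; its test set is $\{\pi_m\mid m\in M\}$ and $\pi_m^*=\pi_m$. For an involutive submonoid $L$ of $\mathbf{Lin}(\mathcal M)$ containing all $\pi_m$, $\mathscr P(L)$ is the IDA of all subsets of $L$ with union, $A\odot B=\{a\circ b\}$, $A^*=\{a^*\}$, unit $\{\mathrm{id}_M\}$, ${\sim}A=\{\pi_{(\bigvee_{a\in A}a(1))^\perp}\}$. *)

theory Defs
  imports "HOL-Library.FuncSet"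
begin

record 'a ida =
  ida_carrier :: "'a set"
  ida_join    :: "'a set \<Rightarrow> 'a"
  ida_mult    :: "'a \<Rightarrow> 'a \<Rightarrow> 'a"
  ida_star    :: "'a \<Rightarrow> 'a"
  ida_unit    :: "'a"
  ida_neg     :: "'a \<Rightarrow> 'a"

definition ida_le :: "'a ida \<Rightarrow> 'a \<Rightarrow> 'a \<Rightarrow> bool" where
  "ida_le K x y \<longleftrightarrow> ida_join K {x, y} = y"

definition is_ida :: "'a ida \<Rightarrow> bool" where
  "is_ida K \<longleftrightarrow>
    (let C = ida_carrier K; J = ida_join K; m = ida_mult K; s = ida_star K;
         e = ida_unit K; n = ida_neg K in
     \<comment> \<open>closure of the operations\<close>
     (\<forall>A. A \<subseteq> C \<longrightarrow> J A \<in> C) \<and>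
     (\<forall>x\<in>C. \<forall>y\<in>C. m x y \<in> C) \<and>
     (\<forall>x\<in>C. s x \<in> C) \<and> e \<in> C \<and> (\<forall>x\<in>C. n x \<in> C) \<and>
     \<comment> \<open>complete join-semilattice\<close>
     (\<forall>x\<in>C. ida_le K x x) \<and>
     (\<forall>x\<in>C. \<forall>y\<in>C. ida_le K x y \<and> ida_le K y x \<longrightarrow> x = y) \<and>
     (\<forall>x\<in>C. \<forall>y\<in>C. \<forall>z\<in>C. ida_le K x y \<and> ida_le K y z \<longrightarrow> ida_le K x z) \<and>
     (\<forall>A. A \<subseteq> C \<longrightarrow> (\<forall>a\<in>A. ida_le K a (J A)) \<and>
                         (\<forall>u\<in>C. (\<forall>a\<in>A. ida_le K a u) \<longrightarrow> ida_le K (J A) u)) \<and>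
     \<comment> \<open>unital quantale\<close>
     (\<forall>x\<in>C. \<forall>y\<in>C. \<forall>z\<in>C. m (m x y) z = m x (m y z)) \<and>
     (\<forall>x\<in>C. \<forall>A. A \<subseteq> C \<longrightarrow> m x (J A) = J ((\<lambda>a. m x a) ` A)) \<and>
     (\<forall>x\<in>C. \<forall>A. A \<subseteq> C \<longrightarrow> m (J A) x = J ((\<lambda>a. m a x) ` A)) \<and>
     (\<forall>x\<in>C. m e x = x \<and> m x e = x) \<and>
     \<comment> \<open>involution\<close>
     (\<forall>x\<in>C. s (s x) = x) \<and>
     (\<forall>x\<in>C. \<forall>y\<in>C. s (m x y) = m (s y) (s x)) \<and>
     (\<forall>A. A \<subseteq> C \<longrightarrow> s (J A) = J (s ` A)) \<and>
     \<comment> \<open>axioms for the negation\<close>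
     (\<forall>x\<in>C. \<forall>y\<in>C. n (m x (n (n y))) = n (m x y)) \<and>
     (\<forall>A. A \<subseteq> C \<longrightarrow> n (J ((\<lambda>a. n (n a)) ` A)) = n (J A)) \<and>
     (\<forall>x\<in>C. s (n x) = n x) \<and>
     (\<forall>x\<in>C. \<forall>y\<in>C. n (n (m (n (n x)) y)) = n (J {n x, n (J {n x, y})})))"

definition tests :: "'a ida \<Rightarrow> 'a set" where
  "tests K = ida_neg K ` ida_carrier K"

definition tvee :: "'a ida \<Rightarrow> 'a set \<Rightarrow> 'a" where
  "tvee K W = ida_neg K (ida_neg K (ida_join K W))"

definition tle :: "'a ida \<Rightarrow> 'a \<Rightarrow> 'a \<Rightarrow> bool" where
  "tle K k l \<longleftrightarrow> tvee K {k, l} = l"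

definition bullet :: "'a ida \<Rightarrow> 'a \<Rightarrow> 'a \<Rightarrow> 'a" where
  "bullet K k v = ida_neg K (ida_neg K (ida_mult K k v))"

definition ida_equiv :: "'a ida \<Rightarrow> 'a \<Rightarrow> 'a \<Rightarrow> bool" where
  "ida_equiv K k l \<longleftrightarrow> (\<forall>w\<in>tests K. bullet K k w = bullet K l w)"

definition ida_mor :: "'a ida \<Rightarrow> 'b ida \<Rightarrow> ('a \<Rightarrow> 'b) \<Rightarrow> bool" where
  "ida_mor K1 K2 f \<longleftrightarrow>
     f \<in> ida_carrier K1 \<rightarrow> ida_carrier K2 \<and>
     (\<forall>A. A \<subseteq> ida_carrier K1 \<longrightarrow> f (ida_join K1 A) = ida_join K2 (f ` A)) \<and>
     (\<forall>x\<in>ida_carrier K1. \<forall>y\<in>ida_carrier K1.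
        f (ida_mult K1 x y) = ida_mult K2 (f x) (f y)) \<and>
     (\<forall>x\<in>ida_carrier K1. f (ida_star K1 x) = ida_star K2 (f x)) \<and>
     f (ida_unit K1) = ida_unit K2 \<and>
     (\<forall>x\<in>ida_carrier K1. f (ida_neg K1 x) = ida_neg K2 (f x))"

record 'a invmon =
  im_carrier :: "'a set"
  im_mult    :: "'a \<Rightarrow> 'a \<Rightarrow> 'a"
  im_star    :: "'a \<Rightarrow> 'a"
  im_unit    :: "'a"

definition im_hom :: "'a invmon \<Rightarrow> 'b invmon \<Rightarrow> ('a \<Rightarrow> 'b) \<Rightarrow> bool" where
  "im_hom A B h \<longleftrightarrow>
     h \<in> im_carrier A \<rightarrow> im_carrier B \<and>
     (\<forall>x\<in>im_carrier A. \<forall>y\<in>im_carrier A. h (im_mult A x y) = im_mult B (h x) (h y)) \<and>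
     (\<forall>x\<in>im_carrier A. h (im_star A x) = im_star B (h x)) \<and>
     h (im_unit A) = im_unit B"

definition im_iso :: "'a invmon \<Rightarrow> 'b invmon \<Rightarrow> ('a \<Rightarrow> 'b) \<Rightarrow> bool" where
  "im_iso A B h \<longleftrightarrow> im_hom A B h \<and> bij_betw h (im_carrier A) (im_carrier B)"

definition is_inv_submonoid :: "'a ida \<Rightarrow> 'a set \<Rightarrow> bool" where
  "is_inv_submonoid K S \<longleftrightarrow>
     S \<subseteq> ida_carrier K \<and> ida_unit K \<in> S \<and>
     (\<forall>x\<in>S. \<forall>y\<in>S. ida_mult K x y \<in> S) \<and> (\<forall>x\<in>S. ida_star K x \<in> S)"

inductive_set Tset :: "'a ida \<Rightarrow> 'a set" for K where
  test: "k \<in> ida_carrier K \<Longrightarrow> ida_neg K k \<in> Tset K"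
| unit: "ida_unit K \<in> Tset K"
| mult: "s \<in> Tset K \<Longrightarrow> t \<in> Tset K \<Longrightarrow> ida_mult K s t \<in> Tset K"
| star: "s \<in> Tset K \<Longrightarrow> ida_star K s \<in> Tset K"

definition T_obj :: "'a ida \<Rightarrow> 'a invmon" where
  "T_obj K = \<lparr>im_carrier = Tset K, im_mult = ida_mult K, im_star = ida_star K,
              im_unit = ida_unit K\<rparr>"

definition T_mor :: "'a ida \<Rightarrow> ('a \<Rightarrow> 'b) \<Rightarrow> ('a \<Rightarrow> 'b)" where
  "T_mor K1 f = restrict f (Tset K1)"

record 'a oml =
  om_carrier :: "'a set"
  om_le      :: "'a \<Rightarrow> 'a \<Rightarrow> bool"
  om_perp    :: "'a \<Rightarrow> 'a"

definition om_is_lub :: "'a oml \<Rightarrow> 'a set \<Rightarrow> 'a \<Rightarrow> bool" where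
  "om_is_lub M A s \<longleftrightarrow> s \<in> om_carrier M \<and> (\<forall>a\<in>A. om_le M a s) \<and>
     (\<forall>t\<in>om_carrier M. (\<forall>a\<in>A. om_le M a t) \<longrightarrow> om_le M s t)"

definition om_is_glb :: "'a oml \<Rightarrow> 'a set \<Rightarrow> 'a \<Rightarrow> bool" where
  "om_is_glb M A s \<longleftrightarrow> s \<in> om_carrier M \<and> (\<forall>a\<in>A. om_le M s a) \<and>
     (\<forall>t\<in>om_carrier M. (\<forall>a\<in>A. om_le M t a) \<longrightarrow> om_le M t s)"

definition om_Sup :: "'a oml \<Rightarrow> 'a set \<Rightarrow> 'a" where
  "om_Sup M A = (THE s. om_is_lub M A s)"

definition om_Inf :: "'a oml \<Rightarrow> 'a set \<Rightarrow> 'a" where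
  "om_Inf M A = (THE s. om_is_glb M A s)"

definition om_sup :: "'a oml \<Rightarrow> 'a \<Rightarrow> 'a \<Rightarrow> 'a" where
  "om_sup M x y = om_Sup M {x, y}"

definition om_inf :: "'a oml \<Rightarrow> 'a \<Rightarrow> 'a \<Rightarrow> 'a" where
  "om_inf M x y = om_Inf M {x, y}"

definition om_top :: "'a oml \<Rightarrow> 'a" where
  "om_top M = om_Sup M (om_carrier M)"

definition om_bot :: "'a oml \<Rightarrow> 'a" where
  "om_bot M = om_Sup M {}"

definition complete_oml :: "'a oml \<Rightarrow> bool" where
  "complete_oml M \<longleftrightarrow>
    (let C = om_carrier M; le = om_le M; p = om_perp M in
     (\<forall>x\<in>C. le x x) \<and>
     (\<forall>x\<in>C. \<forall>y\<in>C. le x y \<and> le y x \<longrightarrow> x = y) \<and>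
     (\<forall>x\<in>C. \<forall>y\<in>C. \<forall>z\<in>C. le x y \<and> le y z \<longrightarrow> le x z) \<and>
     (\<forall>A. A \<subseteq> C \<longrightarrow> (\<exists>s. om_is_lub M A s)) \<and>
     (\<forall>x\<in>C. p x \<in> C) \<and>
     (\<forall>x\<in>C. p (p x) = x) \<and>
     (\<forall>x\<in>C. \<forall>y\<in>C. le x y \<longrightarrow> le (p y) (p x)) \<and>
     (\<forall>x\<in>C. om_inf M x (p x) = om_bot M \<and> om_sup M x (p x) = om_top M) \<and>
     (\<forall>x\<in>C. \<forall>y\<in>C. le x y \<longrightarrow> y = om_sup M x (om_inf M (p x) y)))"

definition sasaki :: "'a oml \<Rightarrow> 'a \<Rightarrow> ('a \<Rightarrow> 'a)" where
  "sasaki M m = (\<lambda>x\<in>om_carrier M. om_inf M m (om_sup M (om_perp M m) x))"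

definition is_adjoint :: "'a oml \<Rightarrow> ('a \<Rightarrow> 'a) \<Rightarrow> ('a \<Rightarrow> 'a) \<Rightarrow> bool" where
  "is_adjoint M f g \<longleftrightarrow> g \<in> om_carrier M \<rightarrow>\<^sub>E om_carrier M \<and>
     (\<forall>x\<in>om_carrier M. \<forall>y\<in>om_carrier M.
        om_le M (f x) (om_perp M y) \<longleftrightarrow> om_le M x (om_perp M (g y)))"

definition is_linear :: "'a oml \<Rightarrow> ('a \<Rightarrow> 'a) \<Rightarrow> bool" where
  "is_linear M f \<longleftrightarrow> f \<in> om_carrier M \<rightarrow>\<^sub>E om_carrier M \<and> (\<exists>g. is_adjoint M f g)"

definition adjoint :: "'a oml \<Rightarrow> ('a \<Rightarrow> 'a) \<Rightarrow> ('a \<Rightarrow> 'a)" where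
  "adjoint M f = (THE g. is_adjoint M f g)"

definition om_comp :: "'a oml \<Rightarrow> ('a \<Rightarrow> 'a) \<Rightarrow> ('a \<Rightarrow> 'a) \<Rightarrow> ('a \<Rightarrow> 'a)" where
  "om_comp M f g = (\<lambda>x\<in>om_carrier M. f (g x))"

definition Lin :: "'a oml \<Rightarrow> ('a \<Rightarrow> 'a) ida" where
  "Lin M = \<lparr>ida_carrier = {f. is_linear M f},
            ida_join = (\<lambda>F. \<lambda>x\<in>om_carrier M. om_Sup M ((\<lambda>f. f x) ` F)),
            ida_mult = om_comp M,
            ida_star = adjoint M,
            ida_unit = (\<lambda>x\<in>om_carrier M. x),
            ida_neg = (\<lambda>f. sasaki M (om_perp M (f (om_top M))))\<rparr>"

definition Pset :: "'a oml \<Rightarrow> ('a \<Rightarrow> 'a) set \<Rightarrow> ('a \<Rightarrow> 'a) set ida" where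
  "Pset M L = \<lparr>ida_carrier = Pow L,
               ida_join = Union,
               ida_mult = (\<lambda>A B. {om_comp M a b | a b. a \<in> A \<and> b \<in> B}),
               ida_star = (\<lambda>A. adjoint M ` A),
               ida_unit = {(\<lambda>x\<in>om_carrier M. x)},
               ida_neg = (\<lambda>A. {sasaki M (om_perp M (om_Sup M ((\<lambda>a. a (om_top M)) ` A)))})\<rparr>"

definition tests_oml :: "'a ida \<Rightarrow> 'a oml" where
  "tests_oml K = \<lparr>om_carrier = tests K, om_le = tle K, om_perp = ida_neg K\<rparr>"

definition semi_foulis :: "'a ida \<Rightarrow> bool" where
  "semi_foulis K \<longleftrightarrow> is_ida K \<and> complete_oml (tests_oml K)"

definition nu :: "'a ida \<Rightarrow> 'a \<Rightarrow> ('a \<Rightarrow> 'a)" where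
  "nu K k = (\<lambda>w\<in>tests K. bullet K k w)"

end

theory Submission
  imports Defs
begin

text \<open>
  For (2), the axioms of the negation make \<open>\<nu>\<close> multiplicative and identify \<open>u \<bullet> v\<close> with the
  Sasaki projection \<open>\<pi>\<^sub>u(v)\<close> of the orthomodular lattice of tests. Sasaki projections are
  self-adjoint, so \<open>\<nu>\<close> turns the involution into the adjoint, and an induction over \<open>T(K)\<close>
  shows that \<open>\<nu>\<close> maps \<open>T(K)\<close> onto \<open>T(Lin)\<close>; injectivity is exactly the hypothesis that
  \<open>\<equiv>\<close> separates \<open>T(K)\<close>. The order statement is \<open>\<pi>\<^sub>x = \<pi>\<^sub>y \<circ> \<pi>\<^sub>x\<close> for \<open>x \<preceq> y\<close>, a consequence
  of the orthomodular law.
  For (3), the singletons of \<open>T(Lin M)\<close> are closed under the operations of \<open>P\<close>, and every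
  test of \<open>P\<close> is the singleton of a Sasaki projection, which already lies in \<open>T(Lin M)\<close>.
\<close>

section \<open>Complete orthomodular lattices and Sasaki projections\<close>

locale complete_orthomodular =
  fixes M :: "'a oml"
  assumes complete_oml: "complete_oml M"
begin

abbreviation C where "C \<equiv> om_carrier M"
abbreviation le where "le \<equiv> om_le M"
abbreviation perp where "perp \<equiv> om_perp M"
abbreviation join where "join \<equiv> om_sup M"
abbreviation meet where "meet \<equiv> om_inf M"

lemma om_le_refl: "x \<in> C \<Longrightarrow> le x x"
  using complete_oml unfolding complete_oml_def Let_def by metis

lemma om_le_antisym: "x \<in> C \<Longrightarrow> y \<in> C \<Longrightarrow> le x y \<Longrightarrow> le y x \<Longrightarrow> x = y"
  using complete_oml unfolding complete_oml_def Let_def by metis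

lemma om_le_trans: "x \<in> C \<Longrightarrow> y \<in> C \<Longrightarrow> z \<in> C \<Longrightarrow> le x y \<Longrightarrow> le y z \<Longrightarrow> le x z"
  using complete_oml unfolding complete_oml_def Let_def by metis

lemma lub_exists: "A \<subseteq> C \<Longrightarrow> \<exists>s. om_is_lub M A s"
  using complete_oml unfolding complete_oml_def Let_def by metis

lemma perp_closed: "x \<in> C \<Longrightarrow> perp x \<in> C"
  using complete_oml unfolding complete_oml_def Let_def by metis

lemma perp_perp: "x \<in> C \<Longrightarrow> perp (perp x) = x"
  using complete_oml unfolding complete_oml_def Let_def by metis

lemma perp_antimono: "x \<in> C \<Longrightarrow> y \<in> C \<Longrightarrow> le x y \<Longrightarrow> le (perp y) (perp x)"
  using complete_oml unfolding complete_oml_def Let_def by metis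

lemma orthomodular_law: "x \<in> C \<Longrightarrow> y \<in> C \<Longrightarrow> le x y \<Longrightarrow> y = join x (meet (perp x) y)"
  using complete_oml unfolding complete_oml_def Let_def by metis

lemma perp_le_perp_iff: "x \<in> C \<Longrightarrow> y \<in> C \<Longrightarrow> le (perp y) (perp x) \<longleftrightarrow> le x y"
  by (metis perp_antimono perp_closed perp_perp)

lemma le_perp_commute: "x \<in> C \<Longrightarrow> y \<in> C \<Longrightarrow> le x (perp y) \<longleftrightarrow> le y (perp x)"
  by (metis perp_le_perp_iff perp_closed perp_perp)

lemma om_Sup_eq: "om_is_lub M A s \<Longrightarrow> om_Sup M A = s"
  unfolding om_Sup_def om_is_lub_def by (rule the_equality) (auto intro: om_le_antisym)

lemma om_Inf_eq: "om_is_glb M A s \<Longrightarrow> om_Inf M A = s"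
  unfolding om_Inf_def om_is_glb_def by (rule the_equality) (auto intro: om_le_antisym)

lemma om_Sup_is_lub: "A \<subseteq> C \<Longrightarrow> om_is_lub M A (om_Sup M A)"
  using lub_exists om_Sup_eq by metis

lemma om_Sup_closed: "A \<subseteq> C \<Longrightarrow> om_Sup M A \<in> C"
  using om_Sup_is_lub unfolding om_is_lub_def by blast

lemma om_Sup_upper: "A \<subseteq> C \<Longrightarrow> a \<in> A \<Longrightarrow> le a (om_Sup M A)"
  using om_Sup_is_lub unfolding om_is_lub_def by blast

lemma om_Sup_least: "A \<subseteq> C \<Longrightarrow> t \<in> C \<Longrightarrow> (\<And>a. a \<in> A \<Longrightarrow> le a t) \<Longrightarrow> le (om_Sup M A) t"
  using om_Sup_is_lub unfolding om_is_lub_def by blast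

lemma om_Sup_singleton: "x \<in> C \<Longrightarrow> om_Sup M {x} = x"
  by (intro om_Sup_eq) (auto simp: om_is_lub_def om_le_refl)

lemma om_sup_closed: "x \<in> C \<Longrightarrow> y \<in> C \<Longrightarrow> join x y \<in> C"
  unfolding om_sup_def by (intro om_Sup_closed) auto

lemma om_sup_ge1: "x \<in> C \<Longrightarrow> y \<in> C \<Longrightarrow> le x (join x y)"
  unfolding om_sup_def by (intro om_Sup_upper) auto

lemma om_sup_ge2: "x \<in> C \<Longrightarrow> y \<in> C \<Longrightarrow> le y (join x y)"
  unfolding om_sup_def by (intro om_Sup_upper) auto

lemma om_sup_least: "x \<in> C \<Longrightarrow> y \<in> C \<Longrightarrow> z \<in> C \<Longrightarrow> le x z \<Longrightarrow> le y z \<Longrightarrow> le (join x y) z"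
  unfolding om_sup_def by (intro om_Sup_least) auto

text \<open>Only joins are assumed to exist; meets are obtained from them by De Morgan.\<close>

lemma om_inf_de_morgan: "x \<in> C \<Longrightarrow> y \<in> C \<Longrightarrow> meet x y = perp (join (perp x) (perp y))"
  unfolding om_inf_def
proof (intro om_Inf_eq)
  assume x: "x \<in> C" and y: "y \<in> C"
  have j: "join (perp x) (perp y) \<in> C"
    using x y by (simp add: perp_closed om_sup_closed)
  show "om_is_glb M {x, y} (perp (join (perp x) (perp y)))"
    unfolding om_is_glb_def
  proof (intro conjI ballI impI)
    show "perp (join (perp x) (perp y)) \<in> C"
      using j by (rule perp_closed)
  next
    fix a assume "a \<in> {x, y}"
    then show "le (perp (join (perp x) (perp y))) a"
      using x y j by (metis empty_iff insert_iff perp_antimono perp_closed perp_perp om_sup_ge1 om_sup_ge2)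
  next
    fix t assume t: "t \<in> C" and lower: "\<forall>a\<in>{x, y}. le t a"
    have "le (join (perp x) (perp y)) (perp t)"
      using lower x y t by (intro om_sup_least) (auto simp: perp_closed perp_antimono)
    then show "le t (perp (join (perp x) (perp y)))"
      using j t by (simp add: le_perp_commute)
  qed
qed

lemma perp_join: "x \<in> C \<Longrightarrow> y \<in> C \<Longrightarrow> perp (join x y) = meet (perp x) (perp y)"
  by (simp add: om_inf_de_morgan perp_closed perp_perp)

lemma perp_meet: "x \<in> C \<Longrightarrow> y \<in> C \<Longrightarrow> perp (meet x y) = join (perp x) (perp y)"
  by (simp add: om_inf_de_morgan perp_closed perp_perp om_sup_closed)

lemma om_inf_closed: "x \<in> C \<Longrightarrow> y \<in> C \<Longrightarrow> meet x y \<in> C"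
  by (simp add: om_inf_de_morgan perp_closed om_sup_closed)

lemma om_inf_le1: "x \<in> C \<Longrightarrow> y \<in> C \<Longrightarrow> le (meet x y) x"
  by (metis perp_meet le_perp_commute perp_closed om_inf_closed om_sup_ge1 perp_perp)

lemma om_inf_le2: "x \<in> C \<Longrightarrow> y \<in> C \<Longrightarrow> le (meet x y) y"
  by (metis perp_meet le_perp_commute perp_closed om_inf_closed om_sup_ge2 perp_perp)

lemma om_inf_greatest: "x \<in> C \<Longrightarrow> y \<in> C \<Longrightarrow> z \<in> C \<Longrightarrow> le z x \<Longrightarrow> le z y \<Longrightarrow> le z (meet x y)"
  by (smt (verit) om_inf_de_morgan perp_antimono perp_closed perp_perp om_sup_closed om_sup_least)

lemma om_top_closed: "om_top M \<in> C"
  unfolding om_top_def by (rule om_Sup_closed) simp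

lemma om_le_top: "x \<in> C \<Longrightarrow> le x (om_top M)"
  unfolding om_top_def by (rule om_Sup_upper) auto

lemma om_sup_top: "x \<in> C \<Longrightarrow> join x (om_top M) = om_top M"
  by (meson om_le_antisym om_le_refl om_le_top om_sup_ge2 om_sup_closed om_sup_least om_top_closed)

lemma om_inf_top: "x \<in> C \<Longrightarrow> meet x (om_top M) = x"
  by (meson om_inf_greatest om_inf_closed om_inf_le1 om_le_antisym om_le_refl om_le_top om_top_closed)

lemma om_sup_mono: "a \<in> C \<Longrightarrow> x \<in> C \<Longrightarrow> y \<in> C \<Longrightarrow> le x y \<Longrightarrow> le (join a x) (join a y)"
  by (meson om_le_trans om_sup_ge1 om_sup_ge2 om_sup_closed om_sup_least)

lemma om_inf_mono: "a \<in> C \<Longrightarrow> x \<in> C \<Longrightarrow> y \<in> C \<Longrightarrow> le x y \<Longrightarrow> le (meet a x) (meet a y)"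
  by (meson om_le_trans om_inf_le1 om_inf_le2 om_inf_closed om_inf_greatest)

lemma om_sup_absorb: "a \<in> C \<Longrightarrow> b \<in> C \<Longrightarrow> join a (join a b) = join a b"
  by (meson om_le_antisym om_le_refl om_sup_ge1 om_sup_ge2 om_sup_closed om_sup_least)

lemma orthomodular_law_dual:
  assumes z: "z \<in> C" and y: "y \<in> C" and "le z y"
  shows "meet y (join (perp y) z) = z"
proof -
  have "perp z = join (perp y) (meet y (perp z))"
    using orthomodular_law[of "perp y" "perp z"] assms by (simp add: perp_antimono perp_closed perp_perp)
  then have "z = perp (join (perp y) (meet y (perp z)))"
    using z by (metis perp_perp)
  also have "\<dots> = meet y (join (perp y) z)"
    using y z by (simp add: perp_join perp_meet perp_closed om_inf_closed perp_perp)
  finally show ?thesis by simp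
qed

lemma sasaki_apply: "x \<in> C \<Longrightarrow> sasaki M m x = meet m (join (perp m) x)"
  unfolding sasaki_def by simp

lemma sasaki_closed: "m \<in> C \<Longrightarrow> x \<in> C \<Longrightarrow> sasaki M m x \<in> C"
  by (simp add: sasaki_apply om_inf_closed om_sup_closed perp_closed)

lemma sasaki_PiE: "m \<in> C \<Longrightarrow> sasaki M m \<in> C \<rightarrow>\<^sub>E C"
  by (auto simp: sasaki_def om_inf_closed om_sup_closed perp_closed)

lemma sasaki_top: "m \<in> C \<Longrightarrow> sasaki M m (om_top M) = m"
  by (simp add: sasaki_apply om_top_closed om_sup_top om_inf_top perp_closed)

lemma sasaki_le: "m \<in> C \<Longrightarrow> x \<in> C \<Longrightarrow> le (sasaki M m x) m"
  by (simp add: sasaki_apply om_inf_le1 om_sup_closed perp_closed)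

lemma sasaki_mono: "m \<in> C \<Longrightarrow> x \<in> C \<Longrightarrow> y \<in> C \<Longrightarrow> le x y \<Longrightarrow> le (sasaki M m x) (sasaki M m y)"
  by (simp add: sasaki_apply om_inf_mono om_sup_mono om_sup_closed perp_closed)

lemma sasaki_idem_below: "m \<in> C \<Longrightarrow> z \<in> C \<Longrightarrow> le z m \<Longrightarrow> sasaki M m z = z"
  by (simp add: sasaki_apply orthomodular_law_dual)

text \<open>The Sasaki projection is left adjoint to the Sasaki hook \<open>x \<mapsto> m\<^sup>\<bottom> \<or> (m \<and> x)\<close>.\<close>

lemma sasaki_galois:
  assumes m: "m \<in> C" and x: "x \<in> C" and z: "z \<in> C"
  shows "le (sasaki M m x) z \<longleftrightarrow> le x (join (perp m) (meet m z))"
proof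
  have pm: "perp m \<in> C" and mz: "meet m z \<in> C" and px: "sasaki M m x \<in> C"
    using m x z by (auto simp: perp_closed om_inf_closed sasaki_closed)
  assume "le (sasaki M m x) z"
  then have below: "le (sasaki M m x) (meet m z)"
    using m x z by (simp add: om_inf_greatest sasaki_closed sasaki_le)
  have "join (perp m) x = join (perp m) (meet (perp (perp m)) (join (perp m) x))"
    using orthomodular_law[of "perp m" "join (perp m) x"] pm x by (simp add: om_sup_ge1 om_sup_closed)
  then have "join (perp m) x = join (perp m) (sasaki M m x)"
    using m x by (simp add: perp_perp sasaki_apply)
  moreover have "le x (join (perp m) x)"
    using pm x by (rule om_sup_ge2)
  moreover have "le (join (perp m) (sasaki M m x)) (join (perp m) (meet m z))"
    using below pm mz px by (simp add: om_sup_mono)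
  ultimately show "le x (join (perp m) (meet m z))"
    using pm x mz px by (metis om_le_trans om_sup_closed)
next
  have h: "join (perp m) (meet m z) \<in> C"
    using m z by (simp add: perp_closed om_inf_closed om_sup_closed)
  assume "le x (join (perp m) (meet m z))"
  then have "le (sasaki M m x) (sasaki M m (join (perp m) (meet m z)))"
    by (rule sasaki_mono[OF m x h])
  moreover have "sasaki M m (join (perp m) (meet m z)) = meet m z"
    using m z h by (simp add: sasaki_apply om_sup_absorb orthomodular_law_dual
        om_inf_le1 om_inf_closed perp_closed)
  ultimately show "le (sasaki M m x) z"
    using m x z by (metis om_inf_closed om_inf_le2 om_le_trans sasaki_closed)
qed

lemma sasaki_self_adjoint:
  assumes m: "m \<in> C" and x: "x \<in> C" and y: "y \<in> C"
  shows "le (sasaki M m x) (perp y) \<longleftrightarrow> le x (perp (sasaki M m y))"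
proof -
  have "perp (sasaki M m y) = join (perp m) (perp (join (perp m) y))"
    using m y by (simp add: sasaki_apply perp_meet perp_closed om_sup_closed)
  also have "\<dots> = join (perp m) (meet m (perp y))"
    using m y by (simp add: perp_join perp_closed perp_perp)
  finally show ?thesis
    using m x y by (simp add: sasaki_galois perp_closed)
qed

lemma is_adjoint_sasaki: "m \<in> C \<Longrightarrow> is_adjoint M (sasaki M m) (sasaki M m)"
  unfolding is_adjoint_def by (simp add: sasaki_PiE sasaki_self_adjoint)

lemma is_linear_sasaki: "m \<in> C \<Longrightarrow> is_linear M (sasaki M m)"
  unfolding is_linear_def using is_adjoint_sasaki sasaki_PiE by blast

lemma sasaki_comp_le: "a \<in> C \<Longrightarrow> b \<in> C \<Longrightarrow> le a b \<Longrightarrow> sasaki M a = om_comp M (sasaki M b) (sasaki M a)"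
proof
  fix x assume a: "a \<in> C" and b: "b \<in> C" and ab: "le a b"
  show "sasaki M a x = om_comp M (sasaki M b) (sasaki M a) x"
  proof (cases "x \<in> C")
    case True
    have "le (sasaki M a x) b"
      using sasaki_le[OF a True] ab a b True by (metis om_le_trans sasaki_closed)
    then show ?thesis
      using True a b by (simp add: om_comp_def sasaki_idem_below sasaki_closed)
  next
    case False
    then show ?thesis by (simp add: om_comp_def sasaki_def)
  qed
qed

lemma adjoint_unique:
  assumes g: "is_adjoint M f g" and h: "is_adjoint M f h"
  shows "g = h"
proof
  fix y
  show "g y = h y"
  proof (cases "y \<in> C")
    case False
    then show ?thesis using g h unfolding is_adjoint_def PiE_def extensional_def by auto
  next
    case True
    have gy: "g y \<in> C" and hy: "h y \<in> C" using g h True unfolding is_adjoint_def by auto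
    have "\<forall>x\<in>C. le x (perp (g y)) \<longleftrightarrow> le x (perp (h y))"
      using g h True unfolding is_adjoint_def by blast
    then have "perp (g y) = perp (h y)"
      using gy hy by (meson om_le_antisym om_le_refl perp_closed)
    then show ?thesis using gy hy by (metis perp_perp)
  qed
qed

lemma adjoint_eq: "is_adjoint M f g \<Longrightarrow> adjoint M f = g"
  unfolding adjoint_def by (metis adjoint_unique the_equality)

lemma is_adjoint_sym:
  assumes f: "f \<in> C \<rightarrow>\<^sub>E C" and fg: "is_adjoint M f g"
  shows "is_adjoint M g f"
  unfolding is_adjoint_def
proof (intro conjI ballI)
  show "f \<in> C \<rightarrow>\<^sub>E C" by (rule f)
  fix x y assume x: "x \<in> C" and y: "y \<in> C"
  have "f y \<in> C" and "g x \<in> C"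
    using f fg x y unfolding is_adjoint_def by auto
  then show "le (g x) (perp y) \<longleftrightarrow> le x (perp (f y))"
    using fg x y unfolding is_adjoint_def by (metis le_perp_commute)
qed

lemma is_adjoint_comp:
  "is_adjoint M f f' \<Longrightarrow> is_adjoint M g g' \<Longrightarrow> f \<in> C \<rightarrow>\<^sub>E C \<Longrightarrow> g \<in> C \<rightarrow>\<^sub>E C
   \<Longrightarrow> is_adjoint M (om_comp M f g) (om_comp M g' f')"
  unfolding is_adjoint_def om_comp_def by (auto simp: PiE_def Pi_def extensional_def)

lemma is_adjoint_id: "is_adjoint M (\<lambda>x\<in>C. x) (\<lambda>x\<in>C. x)"
  unfolding is_adjoint_def by (auto simp: le_perp_commute)

lemma is_adjoint_adjoint: "is_linear M f \<Longrightarrow> is_adjoint M f (adjoint M f)"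
  unfolding is_linear_def using adjoint_eq by metis

lemma is_linear_adjoint: "is_linear M f \<Longrightarrow> is_linear M (adjoint M f)"
  by (metis is_adjoint_sym is_adjoint_def is_linear_def is_adjoint_adjoint)

lemma om_comp_PiE: "f \<in> C \<rightarrow>\<^sub>E C \<Longrightarrow> g \<in> C \<rightarrow>\<^sub>E C \<Longrightarrow> om_comp M f g \<in> C \<rightarrow>\<^sub>E C"
  by (auto simp: om_comp_def)

lemma is_linear_comp: "is_linear M f \<Longrightarrow> is_linear M g \<Longrightarrow> is_linear M (om_comp M f g)"
  unfolding is_linear_def using is_adjoint_comp om_comp_PiE by blast

lemma is_linear_id: "is_linear M (\<lambda>x\<in>C. x)"
  unfolding is_linear_def using is_adjoint_id by auto

end
section \<open>The dynamic algebras \<open>Lin(M)\<close> and \<open>P(L)\<close>\<close>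

lemma Lin_simps [simp]:
  "ida_carrier (Lin M) = {f. is_linear M f}"
  "ida_mult (Lin M) = om_comp M"
  "ida_star (Lin M) = adjoint M"
  "ida_unit (Lin M) = (\<lambda>x\<in>om_carrier M. x)"
  "ida_neg (Lin M) = (\<lambda>f. sasaki M (om_perp M (f (om_top M))))"
  by (simp_all add: Lin_def)

lemma Pset_simps [simp]:
  "ida_carrier (Pset M L) = Pow L"
  "ida_mult (Pset M L) = (\<lambda>A B. {om_comp M a b | a b. a \<in> A \<and> b \<in> B})"
  "ida_star (Pset M L) = (\<lambda>A. adjoint M ` A)"
  "ida_unit (Pset M L) = {(\<lambda>x\<in>om_carrier M. x)}"
  "ida_neg (Pset M L) = (\<lambda>A. {sasaki M (om_perp M (om_Sup M ((\<lambda>a. a (om_top M)) ` A)))})"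
  by (simp_all add: Pset_def)

context complete_orthomodular
begin

lemma is_linear_top_closed: "is_linear M f \<Longrightarrow> f (om_top M) \<in> C"
  unfolding is_linear_def using om_top_closed by auto

lemma Tset_Lin_linear: "f \<in> Tset (Lin M) \<Longrightarrow> is_linear M f"
proof (induction rule: Tset.induct)
  case unit
  show ?case by (simp only: Lin_simps is_linear_id)
qed (simp_all add: is_linear_top_closed perp_closed is_linear_sasaki is_linear_comp
    is_linear_adjoint)

text \<open>Every Sasaki projection is a test of \<open>Lin(M)\<close>, namely \<open>\<sim>\<pi>\<^bsub>m\<^sup>\<bottom>\<^esub>\<close>.\<close>

lemma sasaki_in_Tset_Lin: "m \<in> C \<Longrightarrow> sasaki M m \<in> Tset (Lin M)"
  using Tset.test[of "sasaki M (perp m)" "Lin M"]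
  by (simp add: is_linear_sasaki sasaki_top perp_closed perp_perp)

lemma singleton_in_Tset_Pset: "f \<in> Tset (Lin M) \<Longrightarrow> {f} \<in> Tset (Pset M (Tset (Lin M)))"
proof (induction rule: Tset.induct)
  case (test k)
  have m: "k (om_top M) \<in> C"
    using test by (simp add: is_linear_top_closed)
  then have "ida_neg (Pset M (Tset (Lin M))) {sasaki M (k (om_top M))} = {ida_neg (Lin M) k}"
    by (simp add: sasaki_top om_Sup_singleton)
  moreover have "{sasaki M (k (om_top M))} \<in> ida_carrier (Pset M (Tset (Lin M)))"
    using m by (simp add: sasaki_in_Tset_Lin)
  ultimately show ?case by (metis Tset.test)
next
  case unit
  show ?case using Tset.unit[of "Pset M (Tset (Lin M))"] by (simp only: Lin_simps Pset_simps)
next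
  case (mult f g)
  have "ida_mult (Pset M (Tset (Lin M))) {f} {g} = {ida_mult (Lin M) f g}" by auto
  then show ?case using Tset.mult[OF mult.IH] by metis
next
  case (star f)
  have "ida_star (Pset M (Tset (Lin M))) {f} = {ida_star (Lin M) f}" by auto
  then show ?case using Tset.star[OF star.IH] by metis
qed

lemma Tset_Pset_singleton: "A \<in> Tset (Pset M (Tset (Lin M))) \<Longrightarrow> \<exists>f\<in>Tset (Lin M). A = {f}"
proof (induction rule: Tset.induct)
  case (test B)
  have "(\<lambda>a. a (om_top M)) ` B \<subseteq> C"
    using test Tset_Lin_linear is_linear_top_closed by auto
  then have "perp (om_Sup M ((\<lambda>a. a (om_top M)) ` B)) \<in> C"
    by (simp add: om_Sup_closed perp_closed)
  then show ?case by (simp add: sasaki_in_Tset_Lin)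
next
  case unit
  show ?case using Tset.unit[of "Lin M"] by (simp only: Lin_simps Pset_simps) blast
next
  case (mult A B)
  then obtain f g where "f \<in> Tset (Lin M)" "A = {f}" "g \<in> Tset (Lin M)" "B = {g}" by blast
  then show ?case using Tset.mult[of f "Lin M" g] by auto
next
  case (star A)
  then obtain f where "f \<in> Tset (Lin M)" "A = {f}" by blast
  then show ?case using Tset.star[of f "Lin M"] by auto
qed

lemma singleton_im_iso: "im_iso (T_obj (Lin M)) (T_obj (Pset M (Tset (Lin M)))) (\<lambda>f. {f})"
  unfolding im_iso_def im_hom_def T_obj_def bij_betw_def
  using singleton_in_Tset_Pset Tset_Pset_singleton by (auto simp: image_iff)

end

section \<open>Involutive generalized dynamic algebras\<close>

locale inv_dyn_algebra =
  fixes K :: "'a ida"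
  assumes is_ida: "is_ida K"
begin

abbreviation KC where "KC \<equiv> ida_carrier K"
abbreviation J where "J \<equiv> ida_join K"
abbreviation mult where "mult \<equiv> ida_mult K"
abbreviation star where "star \<equiv> ida_star K"
abbreviation e where "e \<equiv> ida_unit K"
abbreviation neg where "neg \<equiv> ida_neg K"
abbreviation lq where "lq \<equiv> ida_le K"

lemma join_closed: "A \<subseteq> KC \<Longrightarrow> J A \<in> KC"
  using is_ida unfolding is_ida_def Let_def by metis

lemma mult_closed: "x \<in> KC \<Longrightarrow> y \<in> KC \<Longrightarrow> mult x y \<in> KC"
  using is_ida unfolding is_ida_def Let_def by metis

lemma star_closed: "x \<in> KC \<Longrightarrow> star x \<in> KC"
  using is_ida unfolding is_ida_def Let_def by metis

lemma unit_closed: "e \<in> KC"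
  using is_ida unfolding is_ida_def Let_def by metis

lemma neg_closed: "x \<in> KC \<Longrightarrow> neg x \<in> KC"
  using is_ida unfolding is_ida_def Let_def by metis

lemma lq_refl: "x \<in> KC \<Longrightarrow> lq x x"
  using is_ida unfolding is_ida_def Let_def by metis

lemma lq_antisym: "x \<in> KC \<Longrightarrow> y \<in> KC \<Longrightarrow> lq x y \<Longrightarrow> lq y x \<Longrightarrow> x = y"
  using is_ida unfolding is_ida_def Let_def by metis

lemma lq_trans: "x \<in> KC \<Longrightarrow> y \<in> KC \<Longrightarrow> z \<in> KC \<Longrightarrow> lq x y \<Longrightarrow> lq y z \<Longrightarrow> lq x z"
  using is_ida unfolding is_ida_def Let_def by metis

lemma join_upper: "A \<subseteq> KC \<Longrightarrow> a \<in> A \<Longrightarrow> lq a (J A)"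
  using is_ida unfolding is_ida_def Let_def by metis

lemma join_least: "A \<subseteq> KC \<Longrightarrow> u \<in> KC \<Longrightarrow> (\<forall>a\<in>A. lq a u) \<Longrightarrow> lq (J A) u"
  using is_ida unfolding is_ida_def Let_def by metis

lemma mult_assoc: "x \<in> KC \<Longrightarrow> y \<in> KC \<Longrightarrow> z \<in> KC \<Longrightarrow> mult (mult x y) z = mult x (mult y z)"
  using is_ida unfolding is_ida_def Let_def by metis

lemma mult_unit_left: "x \<in> KC \<Longrightarrow> mult e x = x"
  using is_ida unfolding is_ida_def Let_def by metis

lemma mult_unit_right: "x \<in> KC \<Longrightarrow> mult x e = x"
  using is_ida unfolding is_ida_def Let_def by metis

lemma star_star: "x \<in> KC \<Longrightarrow> star (star x) = x"
  using is_ida unfolding is_ida_def Let_def by metis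

lemma star_mult: "x \<in> KC \<Longrightarrow> y \<in> KC \<Longrightarrow> star (mult x y) = mult (star y) (star x)"
  using is_ida unfolding is_ida_def Let_def by metis

lemma neg_mult_neg_neg: "x \<in> KC \<Longrightarrow> y \<in> KC \<Longrightarrow> neg (mult x (neg (neg y))) = neg (mult x y)"
  using is_ida unfolding is_ida_def Let_def by metis

lemma neg_join_neg_neg: "A \<subseteq> KC \<Longrightarrow> neg (J ((\<lambda>a. neg (neg a)) ` A)) = neg (J A)"
  using is_ida unfolding is_ida_def Let_def by metis

lemma star_neg: "x \<in> KC \<Longrightarrow> star (neg x) = neg x"
  using is_ida unfolding is_ida_def Let_def by metis

lemma neg_neg_mult_neg_neg:
  "x \<in> KC \<Longrightarrow> y \<in> KC \<Longrightarrow> neg (neg (mult (neg (neg x)) y)) = neg (J {neg x, neg (J {neg x, y})})"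
  using is_ida unfolding is_ida_def Let_def by metis

lemma neg_neg_neg: "x \<in> KC \<Longrightarrow> neg (neg (neg x)) = neg x"
  using neg_mult_neg_neg[of e x] by (simp add: mult_unit_left unit_closed neg_closed)

lemma star_unit: "star e = e"
  using mult_unit_right[of "star e"] star_mult[of "star e" e]
  by (simp add: star_closed star_star unit_closed)

lemma tests_subset_carrier: "tests K \<subseteq> KC"
  unfolding tests_def using neg_closed by blast

lemma neg_in_tests: "x \<in> KC \<Longrightarrow> neg x \<in> tests K"
  unfolding tests_def by blast

lemma tests_neg_neg: "u \<in> tests K \<Longrightarrow> neg (neg u) = u"
  unfolding tests_def using neg_neg_neg by blast

lemma join_le_iff: "A \<subseteq> KC \<Longrightarrow> u \<in> KC \<Longrightarrow> lq (J A) u \<longleftrightarrow> (\<forall>a\<in>A. lq a u)"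
  by (meson join_closed join_least join_upper lq_trans subsetD)

lemma join_eqI:
  "A \<subseteq> KC \<Longrightarrow> B \<subseteq> KC \<Longrightarrow> (\<And>u. u \<in> KC \<Longrightarrow> (\<forall>a\<in>A. lq a u) \<longleftrightarrow> (\<forall>b\<in>B. lq b u))
   \<Longrightarrow> J A = J B"
  by (meson join_closed lq_antisym lq_refl join_le_iff)

lemma join2_closed: "a \<in> KC \<Longrightarrow> b \<in> KC \<Longrightarrow> J {a, b} \<in> KC"
  by (simp add: join_closed)

lemma join2_absorb: "a \<in> KC \<Longrightarrow> b \<in> KC \<Longrightarrow> J {a, J {a, b}} = J {a, b}"
  by (rule join_eqI) (auto simp: join2_closed join_le_iff)

lemma join2_assoc: "a \<in> KC \<Longrightarrow> b \<in> KC \<Longrightarrow> c \<in> KC \<Longrightarrow> J {J {a, b}, c} = J {a, J {b, c}}"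
  by (rule join_eqI) (auto simp: join2_closed join_le_iff)

lemma neg_join2_neg_neg: "a \<in> KC \<Longrightarrow> b \<in> KC \<Longrightarrow> neg (J {neg (neg a), neg (neg b)}) = neg (J {a, b})"
  using neg_join_neg_neg[of "{a, b}"] by simp

lemma tvee_closed: "a \<in> tests K \<Longrightarrow> b \<in> tests K \<Longrightarrow> tvee K {a, b} \<in> tests K"
  unfolding tvee_def using tests_subset_carrier by (simp add: join2_closed neg_closed neg_in_tests subset_iff)

lemma tvee_upper:
  assumes a: "a \<in> tests K" and b: "b \<in> tests K"
  shows "tle K a (tvee K {a, b})"
proof -
  have aK: "a \<in> KC" and bK: "b \<in> KC" using a b tests_subset_carrier by auto
  have "neg (J {a, neg (neg (J {a, b}))}) = neg (J {neg (neg a), neg (neg (J {a, b}))})"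
    using a by (simp add: tests_neg_neg)
  also have "\<dots> = neg (J {a, J {a, b}})"
    using aK bK by (simp add: neg_join2_neg_neg join2_closed)
  also have "\<dots> = neg (J {a, b})"
    using aK bK by (simp add: join2_absorb)
  finally show ?thesis unfolding tle_def tvee_def by simp
qed

lemma tvee_least:
  assumes a: "a \<in> tests K" and b: "b \<in> tests K" and c: "c \<in> tests K"
    and ac: "tle K a c" and bc: "tle K b c"
  shows "tle K (tvee K {a, b}) c"
proof -
  have aK: "a \<in> KC" and bK: "b \<in> KC" and cK: "c \<in> KC"
    using a b c tests_subset_carrier by auto
  have ac': "neg (neg (J {a, c})) = c" and bc': "neg (neg (J {b, c})) = c"
    using ac bc unfolding tle_def tvee_def by auto
  have "neg (J {neg (neg (J {a, b})), c}) = neg (J {neg (neg (J {a, b})), neg (neg c)})"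
    using c by (simp add: tests_neg_neg)
  also have "\<dots> = neg (J {J {a, b}, c})"
    using aK bK cK by (simp add: neg_join2_neg_neg join2_closed)
  also have "\<dots> = neg (J {a, J {b, c}})"
    using aK bK cK by (simp add: join2_assoc)
  also have "\<dots> = neg (J {neg (neg a), neg (neg (J {b, c}))})"
    using aK bK cK by (simp add: neg_join2_neg_neg join2_closed)
  also have "\<dots> = neg (J {a, c})"
    using a bc' by (simp add: tests_neg_neg)
  also have "\<dots> = neg c"
    using ac' aK cK by (metis neg_neg_neg join2_closed)
  finally show ?thesis
    unfolding tle_def tvee_def using c by (simp add: tests_neg_neg)
qed

lemma bullet_in_tests: "k \<in> KC \<Longrightarrow> w \<in> KC \<Longrightarrow> bullet K k w \<in> tests K"
  unfolding bullet_def by (simp add: mult_closed neg_closed neg_in_tests)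

lemma Tset_subset_carrier: "Tset K \<subseteq> KC"
proof
  fix x assume "x \<in> Tset K"
  then show "x \<in> KC"
    by (induction rule: Tset.induct) (auto simp: neg_closed unit_closed mult_closed star_closed)
qed

lemma tests_subset_Tset: "tests K \<subseteq> Tset K"
  unfolding tests_def by (auto intro: Tset.test)

lemma Tset_inv_submonoid: "is_inv_submonoid K (Tset K)"
  unfolding is_inv_submonoid_def using Tset_subset_carrier by (auto intro: Tset.intros)

end

lemma ida_mor_image_Tset:
  assumes "is_ida K1" and f: "ida_mor K1 K2 f"
  shows "f ` Tset K1 \<subseteq> Tset K2"
proof -
  interpret inv_dyn_algebra K1 by (rule inv_dyn_algebra.intro) (rule assms(1))
  have "f x \<in> Tset K2" if "x \<in> Tset K1" for x
    using that
  proof (induction rule: Tset.induct)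
    case (test k)
    then show ?case
      using f unfolding ida_mor_def by (auto intro: Tset.test)
  next
    case unit
    then show ?case
      using f unfolding ida_mor_def by (simp add: Tset.unit)
  next
    case (mult s t)
    then have "f (mult s t) = ida_mult K2 (f s) (f t)"
      using f Tset_subset_carrier unfolding ida_mor_def by blast
    then show ?case using mult by (simp add: Tset.mult)
  next
    case (star s)
    then have "f (star s) = ida_star K2 (f s)"
      using f Tset_subset_carrier unfolding ida_mor_def by blast
    then show ?case using star by (simp add: Tset.star)
  qed
  then show ?thesis by blast
qed

section \<open>Semi-Foulis dynamic algebras\<close>

locale semi_foulis_algebra = inv_dyn_algebra +
  assumes tests_complete_oml: "complete_oml (tests_oml K)"
begin

sublocale T: complete_orthomodular "tests_oml K"
  by (rule complete_orthomodular.intro) (rule tests_complete_oml)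

lemma tests_oml_simps [simp]:
  "om_carrier (tests_oml K) = tests K"
  "om_le (tests_oml K) = tle K"
  "om_perp (tests_oml K) = neg"
  by (simp_all add: tests_oml_def)

lemma om_sup_tests:
  assumes a: "a \<in> tests K" and b: "b \<in> tests K"
  shows "om_sup (tests_oml K) a b = tvee K {a, b}"
proof -
  have "tle K b (tvee K {a, b})"
    using tvee_upper[OF b a] by (simp add: insert_commute)
  then have "om_is_lub (tests_oml K) {a, b} (tvee K {a, b})"
    unfolding om_is_lub_def using a b by (auto simp: tvee_upper tvee_least tvee_closed)
  then show ?thesis
    unfolding om_sup_def by (rule T.om_Sup_eq)
qed

text \<open>The last axiom of the negation says exactly that \<open>u \<bullet> v\<close> is the Sasaki projection \<open>\<pi>\<^sub>u(v)\<close>.\<close>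

lemma bullet_eq_sasaki:
  assumes u: "u \<in> tests K" and v: "v \<in> tests K"
  shows "bullet K u v = sasaki (tests_oml K) u v"
proof -
  have uK: "u \<in> KC" and vK: "v \<in> KC" using u v tests_subset_carrier by auto
  have nu: "neg u \<in> tests K" using uK by (rule neg_in_tests)
  have j: "tvee K {neg u, v} \<in> tests K" using nu v by (rule tvee_closed)
  then have nj: "neg (tvee K {neg u, v}) \<in> tests K"
    using tests_subset_carrier by (auto intro: neg_in_tests)
  have "sasaki (tests_oml K) u v = om_inf (tests_oml K) u (tvee K {neg u, v})"
    using v nu by (simp add: T.sasaki_apply om_sup_tests)
  also have "\<dots> = neg (tvee K {neg u, neg (tvee K {neg u, v})})"
    using u j nj nu by (simp add: T.om_inf_de_morgan om_sup_tests)
  also have "\<dots> = neg (J {neg u, neg (J {neg u, v})})"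
    using uK vK by (simp add: tvee_def neg_neg_neg join2_closed neg_closed)
  also have "\<dots> = bullet K u v"
    using u uK vK by (simp add: bullet_def tests_neg_neg flip: neg_neg_mult_neg_neg)
  finally show ?thesis by simp
qed

lemma nu_apply: "w \<in> tests K \<Longrightarrow> nu K s w = bullet K s w"
  unfolding nu_def by simp

lemma nu_test: "u \<in> tests K \<Longrightarrow> nu K u = sasaki (tests_oml K) u"
  unfolding nu_def by (rule ext) (simp add: bullet_eq_sasaki sasaki_def)

lemma nu_PiE: "s \<in> KC \<Longrightarrow> nu K s \<in> om_carrier (tests_oml K) \<rightarrow>\<^sub>E om_carrier (tests_oml K)"
  unfolding nu_def using bullet_in_tests tests_subset_carrier by auto

text \<open>Multiplicativity of \<open>\<nu>\<close> is the first axiom of the negation, \<open>\<sim>(x \<odot> \<sim>\<sim>y) = \<sim>(x \<odot> y)\<close>.\<close>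

lemma nu_mult:
  assumes s: "s \<in> KC" and t: "t \<in> KC"
  shows "nu K (mult s t) = om_comp (tests_oml K) (nu K s) (nu K t)"
proof
  fix w
  show "nu K (mult s t) w = om_comp (tests_oml K) (nu K s) (nu K t) w"
  proof (cases "w \<in> tests K")
    case True
    then have w: "w \<in> KC" using tests_subset_carrier by blast
    have "bullet K t w \<in> tests K" using t w by (rule bullet_in_tests)
    then have "nu K s (nu K t w) = bullet K s (bullet K t w)"
      using True by (simp add: nu_apply)
    also have "\<dots> = bullet K (mult s t) w"
      unfolding bullet_def using s t w by (simp add: neg_mult_neg_neg mult_closed mult_assoc)
    finally show ?thesis using True by (simp add: om_comp_def nu_apply)
  next
    case False
    then show ?thesis by (simp add: om_comp_def nu_def)
  qed
qed

lemma nu_unit: "nu K e = (\<lambda>x\<in>tests K. x)"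
  unfolding nu_def bullet_def
  by (rule restrict_ext) (simp add: subsetD[OF tests_subset_carrier] mult_unit_left tests_neg_neg)

lemma nu_is_adjoint: "s \<in> Tset K \<Longrightarrow> is_adjoint (tests_oml K) (nu K s) (nu K (star s))"
proof (induction rule: Tset.induct)
  case (test k)
  then show ?case
    using T.is_adjoint_sasaki[of "neg k"] by (simp add: star_neg nu_test neg_in_tests)
next
  case unit
  show ?case using T.is_adjoint_id by (simp only: star_unit nu_unit tests_oml_simps)
next
  case (mult s t)
  then have "s \<in> KC" and "t \<in> KC" using Tset_subset_carrier by auto
  then show ?case
    using T.is_adjoint_comp[OF mult.IH nu_PiE nu_PiE]
    by (simp add: star_mult nu_mult star_closed)
next
  case (star s)
  then have "s \<in> KC" using Tset_subset_carrier by auto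
  then show ?case using T.is_adjoint_sym[OF nu_PiE star.IH] by (simp add: star_star)
qed

lemma nu_star: "s \<in> Tset K \<Longrightarrow> nu K (star s) = adjoint (tests_oml K) (nu K s)"
  using nu_is_adjoint T.adjoint_eq by metis

lemma nu_in_Tset_Lin: "s \<in> Tset K \<Longrightarrow> nu K s \<in> Tset (Lin (tests_oml K))"
proof (induction rule: Tset.induct)
  case (test k)
  then show ?case by (simp add: nu_test neg_in_tests T.sasaki_in_Tset_Lin)
next
  case unit
  show ?case
    using Tset.unit[of "Lin (tests_oml K)"] by (simp only: nu_unit Lin_simps tests_oml_simps)
next
  case (mult s t)
  then have "s \<in> KC" "t \<in> KC" using Tset_subset_carrier by auto
  then show ?case using Tset.mult[OF mult.IH] by (simp add: nu_mult)
next
  case (star s)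
  then show ?case using Tset.star[OF star.IH] by (simp add: nu_star)
qed

lemma Tset_Lin_in_nu_image: "g \<in> Tset (Lin (tests_oml K)) \<Longrightarrow> g \<in> nu K ` Tset K"
proof (induction rule: Tset.induct)
  case (test k)
  then have top: "k (om_top (tests_oml K)) \<in> KC"
    using T.is_linear_top_closed tests_subset_carrier by auto
  then have "ida_neg (Lin (tests_oml K)) k = nu K (neg (k (om_top (tests_oml K))))"
    by (simp add: nu_test neg_in_tests)
  then show ?case using Tset.test[OF top] by blast
next
  case unit
  have "ida_unit (Lin (tests_oml K)) = nu K e"
    by (simp only: nu_unit Lin_simps tests_oml_simps)
  then show ?case using Tset.unit by blast
next
  case (mult f g)
  then obtain s t where st: "s \<in> Tset K" "t \<in> Tset K" and "f = nu K s" "g = nu K t"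
    by blast
  moreover have "s \<in> KC" "t \<in> KC" using st Tset_subset_carrier by auto
  ultimately have "ida_mult (Lin (tests_oml K)) f g = nu K (mult s t)"
    by (simp add: nu_mult)
  then show ?case using Tset.mult[OF st] by blast
next
  case (star f)
  then obtain s where s: "s \<in> Tset K" and "f = nu K s" by blast
  then have "ida_star (Lin (tests_oml K)) f = nu K (star s)"
    by (simp add: nu_star)
  then show ?case using Tset.star[OF s] by blast
qed

lemma nu_image_Tset: "nu K ` Tset K = Tset (Lin (tests_oml K))"
  using nu_in_Tset_Lin Tset_Lin_in_nu_image by blast

lemma nu_inj_on_Tset:
  assumes separating: "\<forall>s\<in>Tset K. \<forall>t\<in>Tset K. s = t \<longleftrightarrow> ida_equiv K s t"
  shows "inj_on (nu K) (Tset K)"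
proof (rule inj_onI)
  fix s t assume s: "s \<in> Tset K" and t: "t \<in> Tset K" and eq: "nu K s = nu K t"
  have "ida_equiv K s t"
    unfolding ida_equiv_def using eq by (metis nu_apply)
  then show "s = t" using separating s t by blast
qed

lemma nu_im_iso:
  assumes "\<forall>s\<in>Tset K. \<forall>t\<in>Tset K. s = t \<longleftrightarrow> ida_equiv K s t"
  shows "im_iso (T_obj K) (T_obj (Lin (tests_oml K))) (nu K)"
  unfolding im_iso_def im_hom_def T_obj_def bij_betw_def
  using nu_inj_on_Tset[OF assms] nu_image_Tset Tset_subset_carrier
  by (auto simp: nu_mult nu_star nu_unit subsetD)

lemma nu_bij_betw_tests:
  assumes "\<forall>s\<in>Tset K. \<forall>t\<in>Tset K. s = t \<longleftrightarrow> ida_equiv K s t"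
  shows "bij_betw (nu K) (tests K) {sasaki (tests_oml K) u | u. u \<in> tests K}"
  unfolding bij_betw_def
  using inj_on_subset[OF nu_inj_on_Tset[OF assms] tests_subset_Tset]
  by (auto simp: nu_test)

lemma nu_tle: "x \<in> tests K \<Longrightarrow> y \<in> tests K \<Longrightarrow> tle K x y \<Longrightarrow> nu K x = om_comp (tests_oml K) (nu K y) (nu K x)"
  using T.sasaki_comp_le by (simp add: nu_test)

end

theorem proposition4p9:
  shows
  "(\<forall>K :: 'a ida. is_ida K \<longrightarrow>
       tests K \<subseteq> Tset K \<and> Tset K \<subseteq> ida_carrier K \<and> is_inv_submonoid K (Tset K))
   \<and>
   (\<forall>K :: 'b ida. semi_foulis K \<and>
       (\<forall>s\<in>Tset K. \<forall>t\<in>Tset K. s = t \<longleftrightarrow> ida_equiv K s t) \<longrightarrow>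
       im_iso (T_obj K) (T_obj (Lin (tests_oml K))) (nu K) \<and>
       bij_betw (nu K) (tests K) {sasaki (tests_oml K) u | u. u \<in> tests K} \<and>
       (\<forall>x\<in>tests K. \<forall>y\<in>tests K. tle K x y \<longrightarrow>
          nu K x = om_comp (tests_oml K) (nu K y) (nu K x)))
   \<and>
   (\<forall>M :: 'c oml. complete_oml M \<longrightarrow>
       im_iso (T_obj (Lin M)) (T_obj (Pset M (Tset (Lin M)))) (\<lambda>f. {f}))
   \<and>
   (\<forall>(K1 :: 'd ida) (K2 :: 'e ida) f. is_ida K1 \<and> is_ida K2 \<and> ida_mor K1 K2 f \<longrightarrow>
       f ` Tset K1 \<subseteq> Tset K2 \<and> T_mor K1 f = restrict f (Tset K1))"
proof (intro conjI allI impI ballI)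
  fix K :: "'a ida"
  assume "is_ida K"
  then interpret inv_dyn_algebra K by (rule inv_dyn_algebra.intro)
  show "tests K \<subseteq> Tset K" "Tset K \<subseteq> ida_carrier K" "is_inv_submonoid K (Tset K)"
    by (rule tests_subset_Tset Tset_subset_carrier Tset_inv_submonoid)+
next
  fix K :: "'b ida"
  assume K: "semi_foulis K \<and> (\<forall>s\<in>Tset K. \<forall>t\<in>Tset K. s = t \<longleftrightarrow> ida_equiv K s t)"
  then interpret semi_foulis_algebra K
    unfolding semi_foulis_def
    by (intro semi_foulis_algebra.intro inv_dyn_algebra.intro semi_foulis_algebra_axioms.intro) auto
  show "im_iso (T_obj K) (T_obj (Lin (tests_oml K))) (nu K)"
    using K by (intro nu_im_iso) blast
  show "bij_betw (nu K) (tests K) {sasaki (tests_oml K) u | u. u \<in> tests K}"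
    using K by (intro nu_bij_betw_tests) blast
  fix x y
  assume "x \<in> tests K" "y \<in> tests K" "tle K x y"
  then show "nu K x = om_comp (tests_oml K) (nu K y) (nu K x)"
    by (rule nu_tle)
next
  fix M :: "'c oml"
  assume "complete_oml M"
  then interpret complete_orthomodular M by (rule complete_orthomodular.intro)
  show "im_iso (T_obj (Lin M)) (T_obj (Pset M (Tset (Lin M)))) (\<lambda>f. {f})"
    by (rule singleton_im_iso)
next
  fix K1 :: "'d ida" and K2 :: "'e ida" and f
  assume "is_ida K1 \<and> is_ida K2 \<and> ida_mor K1 K2 f"
  then show "f ` Tset K1 \<subseteq> Tset K2"
    by (intro ida_mor_image_Tset) auto
  show "T_mor K1 f = restrict f (Tset K1)"
    by (rule T_mor_def)
qed

end
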